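(* Let $R$ be a commutative ring with $1$, let $M$ be an le-module over $R$, and suppose the natural map $\psi:\mathrm{Spec}(M)\to\mathrm{Spec}(R/Ann(M))$ is surjective. Then: (i) a subset $Y\subseteq\mathrm{Spec}(M)$ is an irreducible closed subset of $\mathrm{Spec}(M)$ if and only if $Y=V^*(p)$ for some $p\in\mathrm{Spec}(M)$; every irreducible closed subset of $\mathrm{Spec}(M)$ has a generic point; (ii) the correspondence $p\mapsto V^*(p)$ is a surjection of $\mathrm{Spec}(M)$ onto the set of irreducible closed subsets of $\mathrm{Spec}(M)$; (iii) the correspondence $V^*(p)\mapsto (p:e)/Ann(M)$ is a bijection of the set of irreducible components of $\mathrm{Spec}(M)$ onto the set of minimal prime ideals of $R/Ann(M)$.
   Context: An le-module over $R$ is a complete lattice $(M,\leq)$ with greatest element $e$, with a commutative monoid operation $+$ (identity $0_M$) satisfying $m+\bigvee_{i}m_i=\bigvee_i(m+m_i)$ for all families, and a map $R\times M\to M$, $(r,m)\mapsto rm$, such that for all $r,r_1,r_2\in R$, $m,m_1,m_2,m_i\in M$: $r(m_1+m_2)=rm_1+rm_2$; $(r_1+r_2)m\leq r_1m+r_2m$; $(r_1r_2)m=r_1(r_2m)$; $1_Rm=m$; $0_Rm=r0_M=0_M$; $r(\bigvee_i m_i)=\bigvee_i rm_i$. A submodule element is $n\in M$ with $n+n\leq n$ and $rn\leq n$ for all $r\in R$; it is proper if $n\neq e$. For $n\in M$ put $(n:e)=\{r\in R: re\leq n\}$, and $Ann(M)=(0_M:e)$. A prime submodule element is a proper submodule element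 $p$ such that for all $r\in R$, $n\in M$, $rn\leq p$ implies $r\in(p:e)$ or $n\leq p$; $\mathrm{Spec}(M)$ denotes the set of prime submodule elements. For a submodule element $n$, $V^*(n)=\{p\in\mathrm{Spec}(M):(n:e)\subseteq(p:e)\}$; the Zariski topology on $\mathrm{Spec}(M)$ has as closed sets exactly the sets $V^*(n)$, $n$ a submodule element. For $p\in\mathrm{Spec}(M)$, $(p:e)$ is a prime ideal containing $Ann(M)$ and the natural map is $\psi(p)=(p:e)/Ann(M)$. A generic point of a closed set $Y$ is $y\in Y$ with $Y=\overline{\{y\}}$; an irreducible component is a maximal irreducible subset. *)

theory Defs
  imports "HOL-Algebra.Algebra"
begin

text \<open>An le-module over the ring R: the complete lattice M is the type 'm (greatest
element e = Orderings.top), addition madd with identity z, and scalar action sm.\<close>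

definition le_module ::
  "('r, 'x) ring_scheme \<Rightarrow> ('m::complete_lattice \<Rightarrow> 'm \<Rightarrow> 'm) \<Rightarrow> 'm \<Rightarrow> ('r \<Rightarrow> 'm \<Rightarrow> 'm) \<Rightarrow> bool"
where
  "le_module R madd z sm \<longleftrightarrow>
     (\<forall>a b c. madd (madd a b) c = madd a (madd b c)) \<and>
     (\<forall>a b. madd a b = madd b a) \<and>
     (\<forall>a. madd z a = a) \<and>
     (\<forall>m S. S \<noteq> {} \<longrightarrow> madd m (Complete_Lattices.Sup S) = Complete_Lattices.Sup (madd m ` S)) \<and>
     (\<forall>r\<in>carrier R. \<forall>m1 m2. sm r (madd m1 m2) = madd (sm r m1) (sm r m2)) \<and>
     (\<forall>r1\<in>carrier R. \<forall>r2\<in>carrier R. \<forall>m.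
        sm (r1 \<oplus>\<^bsub>R\<^esub> r2) m \<le> madd (sm r1 m) (sm r2 m)) \<and>
     (\<forall>r1\<in>carrier R. \<forall>r2\<in>carrier R. \<forall>m.
        sm (r1 \<otimes>\<^bsub>R\<^esub> r2) m = sm r1 (sm r2 m)) \<and>
     (\<forall>m. sm \<one>\<^bsub>R\<^esub> m = m) \<and>
     (\<forall>m. sm \<zero>\<^bsub>R\<^esub> m = z) \<and>
     (\<forall>r\<in>carrier R. sm r z = z) \<and>
     (\<forall>r\<in>carrier R. \<forall>S. S \<noteq> {} \<longrightarrow> sm r (Complete_Lattices.Sup S) = Complete_Lattices.Sup (sm r ` S))"

definition submodule_elem ::
  "('r, 'x) ring_scheme \<Rightarrow> ('m::complete_lattice \<Rightarrow> 'm \<Rightarrow> 'm) \<Rightarrow> ('r \<Rightarrow> 'm \<Rightarrow> 'm) \<Rightarrow> 'm \<Rightarrow> bool"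
where
  "submodule_elem R madd sm n \<longleftrightarrow> madd n n \<le> n \<and> (\<forall>r\<in>carrier R. sm r n \<le> n)"

definition colon_e :: "('r, 'x) ring_scheme \<Rightarrow> ('r \<Rightarrow> 'm::complete_lattice \<Rightarrow> 'm) \<Rightarrow> 'm \<Rightarrow> 'r set"
where
  "colon_e R sm n = {r \<in> carrier R. sm r Orderings.top \<le> n}"

definition Ann :: "('r, 'x) ring_scheme \<Rightarrow> ('r \<Rightarrow> 'm::complete_lattice \<Rightarrow> 'm) \<Rightarrow> 'm \<Rightarrow> 'r set"
where
  "Ann R sm z = colon_e R sm z"

definition prime_submodule_elem ::
  "('r, 'x) ring_scheme \<Rightarrow> ('m::complete_lattice \<Rightarrow> 'm \<Rightarrow> 'm) \<Rightarrow> ('r \<Rightarrow> 'm \<Rightarrow> 'm) \<Rightarrow> 'm \<Rightarrow> bool"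
where
  "prime_submodule_elem R madd sm p \<longleftrightarrow>
     submodule_elem R madd sm p \<and> p \<noteq> Orderings.top \<and>
     (\<forall>r\<in>carrier R. \<forall>n. sm r n \<le> p \<longrightarrow> r \<in> colon_e R sm p \<or> n \<le> p)"

definition Spec_M ::
  "('r, 'x) ring_scheme \<Rightarrow> ('m::complete_lattice \<Rightarrow> 'm \<Rightarrow> 'm) \<Rightarrow> ('r \<Rightarrow> 'm \<Rightarrow> 'm) \<Rightarrow> 'm set"
where
  "Spec_M R madd sm = {p. prime_submodule_elem R madd sm p}"

definition Vstar ::
  "('r, 'x) ring_scheme \<Rightarrow> ('m::complete_lattice \<Rightarrow> 'm \<Rightarrow> 'm) \<Rightarrow> ('r \<Rightarrow> 'm \<Rightarrow> 'm) \<Rightarrow> 'm \<Rightarrow> 'm set"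
where
  "Vstar R madd sm n = {p \<in> Spec_M R madd sm. colon_e R sm n \<subseteq> colon_e R sm p}"

definition zariski_closed ::
  "('r, 'x) ring_scheme \<Rightarrow> ('m::complete_lattice \<Rightarrow> 'm \<Rightarrow> 'm) \<Rightarrow> ('r \<Rightarrow> 'm \<Rightarrow> 'm) \<Rightarrow> 'm set set"
where
  "zariski_closed R madd sm = {Vstar R madd sm n | n. submodule_elem R madd sm n}"

definition zariski_closure ::
  "('r, 'x) ring_scheme \<Rightarrow> ('m::complete_lattice \<Rightarrow> 'm \<Rightarrow> 'm) \<Rightarrow> ('r \<Rightarrow> 'm \<Rightarrow> 'm) \<Rightarrow> 'm set \<Rightarrow> 'm set"
where
  "zariski_closure R madd sm Y =
     Spec_M R madd sm \<inter> \<Inter>{F \<in> zariski_closed R madd sm. Y \<subseteq> F}"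

definition zariski_irreducible ::
  "('r, 'x) ring_scheme \<Rightarrow> ('m::complete_lattice \<Rightarrow> 'm \<Rightarrow> 'm) \<Rightarrow> ('r \<Rightarrow> 'm \<Rightarrow> 'm) \<Rightarrow> 'm set \<Rightarrow> bool"
where
  "zariski_irreducible R madd sm Y \<longleftrightarrow>
     Y \<subseteq> Spec_M R madd sm \<and> Y \<noteq> {} \<and>
     (\<forall>F1\<in>zariski_closed R madd sm. \<forall>F2\<in>zariski_closed R madd sm.
        Y \<subseteq> F1 \<union> F2 \<longrightarrow> Y \<subseteq> F1 \<or> Y \<subseteq> F2)"

definition irreducible_components ::
  "('r, 'x) ring_scheme \<Rightarrow> ('m::complete_lattice \<Rightarrow> 'm \<Rightarrow> 'm) \<Rightarrow> ('r \<Rightarrow> 'm \<Rightarrow> 'm) \<Rightarrow> 'm set set"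
where
  "irreducible_components R madd sm =
     {Y. zariski_irreducible R madd sm Y \<and>
         (\<forall>Z. zariski_irreducible R madd sm Z \<and> Y \<subseteq> Z \<longrightarrow> Z = Y)}"

definition generic_point ::
  "('r, 'x) ring_scheme \<Rightarrow> ('m::complete_lattice \<Rightarrow> 'm \<Rightarrow> 'm) \<Rightarrow> ('r \<Rightarrow> 'm \<Rightarrow> 'm) \<Rightarrow> 'm set \<Rightarrow> 'm \<Rightarrow> bool"
where
  "generic_point R madd sm Y y \<longleftrightarrow> y \<in> Y \<and> Y = zariski_closure R madd sm {y}"

text \<open>The natural map psi(p) = (p:e)/Ann(M), an element (ideal) of R/Ann(M).\<close>
definition psi ::
  "('r, 'x) ring_scheme \<Rightarrow> ('r \<Rightarrow> 'm::complete_lattice \<Rightarrow> 'm) \<Rightarrow> 'm \<Rightarrow> 'm \<Rightarrow> 'r set set"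
where
  "psi R sm z p = (\<lambda>r. Ann R sm z +>\<^bsub>R\<^esub> r) ` colon_e R sm p"

definition minimal_primeideal :: "'a set \<Rightarrow> ('a, 'b) ring_scheme \<Rightarrow> bool"
where
  "minimal_primeideal P S \<longleftrightarrow>
     primeideal P S \<and> (\<forall>Q. primeideal Q S \<and> Q \<subseteq> P \<longrightarrow> Q = P)"

end

theory Submission
  imports Defs
begin

text \<open>For an irreducible set Y of prime submodule elements, the intersection of the ideals
(q:e), q \<in> Y, is a prime ideal containing Ann(M): if ab e \<le> q for all q \<in> Y, then Y is
covered by the closed sets V*(ae) and V*(be), hence lies in one of them. Surjectivity of
\<psi> realises this prime as (p:e) for a prime submodule element p, and V*(p) is then the
closure of Y. Since V*(p) \<subseteq> V*(q) iff (q:e) \<subseteq> (p:e), and passing to R/Ann(M) preserves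
and reflects inclusions of ideals containing Ann(M), maximal irreducible sets correspond
to minimal primes of R/Ann(M).\<close>

lemma (in ring) Union_rcosets_ideal:
  assumes "ideal I R" "ideal P R" "I \<subseteq> P"
  shows "\<Union> ((+>) I ` P) = P"
  using ideal_incl_iff[OF assms(1,2)] assms(3) by blast

lemma (in ring) quot_ideal_subset_iff:
  assumes I: "ideal I R"
    and P: "ideal P R" "I \<subseteq> P"
    and Q: "ideal Q R" "I \<subseteq> Q"
  shows "(+>) I ` P \<subseteq> (+>) I ` Q \<longleftrightarrow> P \<subseteq> Q"
proof
  assume "(+>) I ` P \<subseteq> (+>) I ` Q"
  then have "\<Union> ((+>) I ` P) \<subseteq> \<Union> ((+>) I ` Q)" by (rule Union_mono)
  then show "P \<subseteq> Q" using Union_rcosets_ideal[OF I P] Union_rcosets_ideal[OF I Q] by simp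
qed (rule image_mono)

lemma (in ring) carrier_quot: "carrier (R Quot I) = (+>) I ` carrier R"
  unfolding FactRing_def A_RCOSETS_def' by auto

lemma (in cring) quot_primeideal:
  assumes I: "ideal I R" and P: "primeideal P R" and IP: "I \<subseteq> P"
  shows "primeideal ((+>) I ` P) (R Quot I)"
proof -
  have P_ideal: "ideal P R" using P by (rule primeideal.axioms)
  have mem_iff: "I +> u \<in> (+>) I ` P \<longleftrightarrow> u \<in> P" if u: "u \<in> carrier R" for u
  proof -
    have "(+>) I ` P \<subseteq> carrier (R Quot I)"
      unfolding carrier_quot using ideal.Icarr[OF P_ideal] by blast
    from canonical_proj_vimage_mem_iff[OF I this u] show ?thesis
      using Union_rcosets_ideal[OF I P_ideal IP] by simp
  qed
  show ?thesis
  proof (rule primeidealI)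
    show "ideal ((+>) I ` P) (R Quot I)" by (rule ring_ideal_imp_quot_ideal[OF I P_ideal])
    show "cring (R Quot I)" by (rule ideal.quotient_is_cring[OF I is_cring])
    have "\<one> \<notin> P" using P primeideal.I_notcarr ideal.one_imp_carrier P_ideal by metis
    then show "carrier (R Quot I) \<noteq> (+>) I ` P" using mem_iff[of \<one>] carrier_quot one_closed by blast
  next
    fix a b assume "a \<in> carrier (R Quot I)" "b \<in> carrier (R Quot I)"
      and ab: "a \<otimes>\<^bsub>R Quot I\<^esub> b \<in> (+>) I ` P"
    then obtain x y where xy: "x \<in> carrier R" "y \<in> carrier R" "a = I +> x" "b = I +> y"
      unfolding carrier_quot by blast
    have "a \<otimes>\<^bsub>R Quot I\<^esub> b = I +> (x \<otimes> y)"
      unfolding FactRing_def using ideal.rcoset_mult_add[OF I xy(1,2)] xy by simp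
    then have "x \<otimes> y \<in> P" using mem_iff ab xy by simp
    then have "x \<in> P \<or> y \<in> P" using primeideal.I_prime[OF P xy(1,2)] by simp
    then show "a \<in> (+>) I ` P \<or> b \<in> (+>) I ` P" using xy by auto
  qed
qed

locale le_module_over = cring R for R :: "('r, 'x) ring_scheme" (structure) +
  fixes madd :: "'m::complete_lattice \<Rightarrow> 'm \<Rightarrow> 'm" and z :: 'm and sm :: "'r \<Rightarrow> 'm \<Rightarrow> 'm"
  assumes le_module: "le_module R madd z sm"
begin

abbreviation e :: 'm where "e \<equiv> Orderings.top"

lemma madd_commute: "madd a b = madd b a"
  using le_module unfolding le_module_def by (elim conjE) simp

lemma madd_z_left: "madd z a = a"
  using le_module unfolding le_module_def by (elim conjE) simp

lemma madd_Sup: "S \<noteq> {} \<Longrightarrow> madd m (Sup S) = Sup (madd m ` S)"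
  using le_module unfolding le_module_def by (elim conjE) simp

lemma sm_madd: "r \<in> carrier R \<Longrightarrow> sm r (madd m1 m2) = madd (sm r m1) (sm r m2)"
  using le_module unfolding le_module_def by (elim conjE) simp

lemma sm_add_le:
  "r1 \<in> carrier R \<Longrightarrow> r2 \<in> carrier R \<Longrightarrow> sm (r1 \<oplus> r2) m \<le> madd (sm r1 m) (sm r2 m)"
  using le_module unfolding le_module_def by (elim conjE) simp

lemma sm_mult: "r1 \<in> carrier R \<Longrightarrow> r2 \<in> carrier R \<Longrightarrow> sm (r1 \<otimes> r2) m = sm r1 (sm r2 m)"
  using le_module unfolding le_module_def by (elim conjE) simp

lemma sm_one: "sm \<one> m = m"
  using le_module unfolding le_module_def by (elim conjE) simp

lemma sm_zero: "sm \<zero> m = z"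
  using le_module unfolding le_module_def by (elim conjE) simp

lemma sm_z: "r \<in> carrier R \<Longrightarrow> sm r z = z"
  using le_module unfolding le_module_def by (elim conjE) simp

lemma sm_Sup: "r \<in> carrier R \<Longrightarrow> S \<noteq> {} \<Longrightarrow> sm r (Sup S) = Sup (sm r ` S)"
  using le_module unfolding le_module_def by (elim conjE) simp

lemma madd_mono_right: "a \<le> b \<Longrightarrow> madd m a \<le> madd m b"
proof -
  assume "a \<le> b"
  then have "madd m b = madd m (Sup {a, b})" by (simp add: sup_absorb2)
  also have "\<dots> = sup (madd m a) (madd m b)" using madd_Sup[of "{a, b}"] by simp
  finally show ?thesis by (simp add: le_iff_sup)
qed

lemma madd_mono: "a \<le> b \<Longrightarrow> c \<le> d \<Longrightarrow> madd a c \<le> madd b d"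
  by (metis madd_mono_right madd_commute order_trans)

lemma sm_mono: "r \<in> carrier R \<Longrightarrow> a \<le> b \<Longrightarrow> sm r a \<le> sm r b"
proof -
  assume r: "r \<in> carrier R" and "a \<le> b"
  then have "sm r b = sm r (Sup {a, b})" by (simp add: sup_absorb2)
  also have "\<dots> = sup (sm r a) (sm r b)" using sm_Sup[OF r, of "{a, b}"] by simp
  finally show ?thesis by (simp add: le_iff_sup)
qed

lemma submodule_elem_z: "submodule_elem R madd sm z"
  unfolding submodule_elem_def using madd_z_left sm_z by simp

lemma z_le_submodule_elem: "submodule_elem R madd sm n \<Longrightarrow> z \<le> n"
  unfolding submodule_elem_def by (metis sm_zero zero_closed)

lemma submodule_elem_sm_top:
  assumes a: "a \<in> carrier R"
  shows "submodule_elem R madd sm (sm a e)"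
  unfolding submodule_elem_def
proof (intro conjI ballI)
  have "madd (sm a e) (sm a e) = sm a (madd e e)" using sm_madd a by simp
  also have "\<dots> \<le> sm a e" using sm_mono a by simp
  finally show "madd (sm a e) (sm a e) \<le> sm a e" .
  fix r assume r: "r \<in> carrier R"
  have "sm r (sm a e) = sm a (sm r e)" using sm_mult r a m_comm by metis
  also have "\<dots> \<le> sm a e" using sm_mono a by simp
  finally show "sm r (sm a e) \<le> sm a e" .
qed

lemma ideal_colon_e:
  assumes n: "submodule_elem R madd sm n"
  shows "ideal (colon_e R sm n) R"
proof -
  have nn: "madd n n \<le> n" and rn: "\<And>r. r \<in> carrier R \<Longrightarrow> sm r n \<le> n"
    using n unfolding submodule_elem_def by auto
  have l_closed: "x \<otimes> a \<in> colon_e R sm n" if "a \<in> colon_e R sm n" "x \<in> carrier R" for a x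
  proof -
    have a: "a \<in> carrier R" "sm a e \<le> n" using that unfolding colon_e_def by auto
    have "sm (x \<otimes> a) e = sm x (sm a e)" using sm_mult a that by simp
    also have "\<dots> \<le> sm x n" using sm_mono a that by simp
    also have "\<dots> \<le> n" using rn that by simp
    finally show ?thesis using a that unfolding colon_e_def by simp
  qed
  have add_closed: "a \<oplus> b \<in> colon_e R sm n"
    if "a \<in> colon_e R sm n" "b \<in> colon_e R sm n" for a b
  proof -
    have ab: "a \<in> carrier R" "sm a e \<le> n" "b \<in> carrier R" "sm b e \<le> n"
      using that unfolding colon_e_def by auto
    have "sm (a \<oplus> b) e \<le> madd (sm a e) (sm b e)" using sm_add_le ab by simp
    also have "\<dots> \<le> madd n n" using madd_mono ab by simp
    also have "\<dots> \<le> n" by (rule nn)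
    finally show ?thesis using ab unfolding colon_e_def by simp
  qed
  have sub: "colon_e R sm n \<subseteq> carrier R" unfolding colon_e_def by auto
  have zero: "\<zero> \<in> colon_e R sm n"
    unfolding colon_e_def using sm_zero z_le_submodule_elem[OF n] by simp
  have inv: "\<ominus> a \<in> colon_e R sm n" if "a \<in> colon_e R sm n" for a
    using l_closed[OF that, of "\<ominus> \<one>"] that sub by (auto simp: l_minus)
  show ?thesis
  proof (rule idealI)
    show "subgroup (colon_e R sm n) (add_monoid R)"
      by (rule subgroup.intro) (use sub zero inv add_closed in \<open>auto simp: a_inv_def[symmetric]\<close>)
    show "x \<otimes> a \<in> colon_e R sm n" if "a \<in> colon_e R sm n" "x \<in> carrier R" for a x
      using l_closed that .
    show "a \<otimes> x \<in> colon_e R sm n" if "a \<in> colon_e R sm n" "x \<in> carrier R" for a x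
      using l_closed[OF that] that sub m_comm by (metis subsetD)
  qed (rule ring_axioms)
qed

lemma Ann_ideal: "ideal (Ann R sm z) R"
  unfolding Ann_def by (rule ideal_colon_e[OF submodule_elem_z])

lemma Ann_subset_colon_e: "submodule_elem R madd sm n \<Longrightarrow> Ann R sm z \<subseteq> colon_e R sm n"
  unfolding Ann_def colon_e_def using z_le_submodule_elem by (auto intro: order_trans)

lemma Spec_M_submodule_elem: "p \<in> Spec_M R madd sm \<Longrightarrow> submodule_elem R madd sm p"
  unfolding Spec_M_def prime_submodule_elem_def by auto

lemma one_notin_colon_e: "p \<in> Spec_M R madd sm \<Longrightarrow> \<one> \<notin> colon_e R sm p"
  unfolding Spec_M_def prime_submodule_elem_def colon_e_def
  using sm_one top.extremum_uniqueI by auto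

lemma primeideal_colon_e:
  assumes p: "p \<in> Spec_M R madd sm"
  shows "primeideal (colon_e R sm p) R"
proof (rule primeidealI)
  show "ideal (colon_e R sm p) R" by (rule ideal_colon_e[OF Spec_M_submodule_elem[OF p]])
  show "cring R" by (rule is_cring)
  show "carrier R \<noteq> colon_e R sm p" using one_notin_colon_e[OF p] by auto
  fix a b assume a: "a \<in> carrier R" and b: "b \<in> carrier R" and "a \<otimes> b \<in> colon_e R sm p"
  then have "sm a (sm b e) \<le> p" using sm_mult unfolding colon_e_def by auto
  then have "a \<in> colon_e R sm p \<or> sm b e \<le> p"
    using p a unfolding Spec_M_def prime_submodule_elem_def by auto
  then show "a \<in> colon_e R sm p \<or> b \<in> colon_e R sm p" using b unfolding colon_e_def by auto
qed

lemma Vstar_sm_top: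
  assumes "a \<in> carrier R"
  shows "Vstar R madd sm (sm a e) = {q \<in> Spec_M R madd sm. a \<in> colon_e R sm q}"
  using assms unfolding Vstar_def colon_e_def by (auto intro: order_trans)

lemma Vstar_subset_Spec_M: "Vstar R madd sm n \<subseteq> Spec_M R madd sm"
  unfolding Vstar_def by blast

lemma Vstar_self: "p \<in> Spec_M R madd sm \<Longrightarrow> p \<in> Vstar R madd sm p"
  unfolding Vstar_def by simp

lemma Vstar_subset_iff:
  "p \<in> Spec_M R madd sm \<Longrightarrow> Vstar R madd sm p \<subseteq> Vstar R madd sm q \<longleftrightarrow> colon_e R sm q \<subseteq> colon_e R sm p"
  unfolding Vstar_def by auto

lemma Vstar_eq_iff:
  "p \<in> Spec_M R madd sm \<Longrightarrow> q \<in> Spec_M R madd sm \<Longrightarrow>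
    Vstar R madd sm p = Vstar R madd sm q \<longleftrightarrow> colon_e R sm p = colon_e R sm q"
  using Vstar_subset_iff[of p q] Vstar_subset_iff[of q p] by auto

lemma Vstar_closed: "p \<in> Spec_M R madd sm \<Longrightarrow> Vstar R madd sm p \<in> zariski_closed R madd sm"
  unfolding zariski_closed_def using Spec_M_submodule_elem by blast

lemma Vstar_subset_closed: "p \<in> F \<Longrightarrow> F \<in> zariski_closed R madd sm \<Longrightarrow> Vstar R madd sm p \<subseteq> F"
  unfolding zariski_closed_def Vstar_def by auto

lemma irreducible_Vstar:
  assumes p: "p \<in> Spec_M R madd sm"
  shows "zariski_irreducible R madd sm (Vstar R madd sm p)"
  unfolding zariski_irreducible_def
proof (intro conjI ballI impI)
  fix F1 F2 assume "F1 \<in> zariski_closed R madd sm" "F2 \<in> zariski_closed R madd sm"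
    "Vstar R madd sm p \<subseteq> F1 \<union> F2"
  then show "Vstar R madd sm p \<subseteq> F1 \<or> Vstar R madd sm p \<subseteq> F2"
    using Vstar_self[OF p] Vstar_subset_closed by blast
qed (use Vstar_subset_Spec_M Vstar_self[OF p] in auto)

lemma generic_point_Vstar:
  assumes p: "p \<in> Spec_M R madd sm"
  shows "generic_point R madd sm (Vstar R madd sm p) p"
proof -
  have "zariski_closure R madd sm {p} = Vstar R madd sm p"
    unfolding zariski_closure_def
    using Vstar_closed[OF p] Vstar_self[OF p] Vstar_subset_closed Vstar_subset_Spec_M by blast
  then show ?thesis unfolding generic_point_def using Vstar_self[OF p] by simp
qed

lemma primeideal_Inter_colon_e:
  assumes Y: "zariski_irreducible R madd sm Y"
  shows "primeideal (\<Inter>q\<in>Y. colon_e R sm q) R"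
proof (rule primeidealI)
  have YS: "Y \<subseteq> Spec_M R madd sm" and Yne: "Y \<noteq> {}"
    using Y unfolding zariski_irreducible_def by auto
  show "ideal (\<Inter>q\<in>Y. colon_e R sm q) R"
    by (rule i_Intersect) (use YS Yne ideal_colon_e Spec_M_submodule_elem in auto)
  obtain q where q: "q \<in> Y" using Yne by blast
  then have "\<one> \<notin> colon_e R sm q" using one_notin_colon_e YS by blast
  then show "carrier R \<noteq> (\<Inter>q\<in>Y. colon_e R sm q)" using q by auto
  show "cring R" by (rule is_cring)
  fix a b assume a: "a \<in> carrier R" and b: "b \<in> carrier R"
    and ab: "a \<otimes> b \<in> (\<Inter>q\<in>Y. colon_e R sm q)"
  have "Y \<subseteq> Vstar R madd sm (sm a e) \<union> Vstar R madd sm (sm b e)"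
  proof
    fix q assume q: "q \<in> Y"
    then have "a \<in> colon_e R sm q \<or> b \<in> colon_e R sm q"
      using primeideal.I_prime[OF primeideal_colon_e, of q a b] YS ab a b by blast
    then show "q \<in> Vstar R madd sm (sm a e) \<union> Vstar R madd sm (sm b e)"
      using Vstar_sm_top a b q YS by auto
  qed
  moreover have "Vstar R madd sm (sm a e) \<in> zariski_closed R madd sm"
    "Vstar R madd sm (sm b e) \<in> zariski_closed R madd sm"
    unfolding zariski_closed_def using submodule_elem_sm_top a b by auto
  ultimately have "Y \<subseteq> Vstar R madd sm (sm a e) \<or> Y \<subseteq> Vstar R madd sm (sm b e)"
    using Y unfolding zariski_irreducible_def by blast
  then show "a \<in> (\<Inter>q\<in>Y. colon_e R sm q) \<or> b \<in> (\<Inter>q\<in>Y. colon_e R sm q)"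
    using Vstar_sm_top a b by auto
qed

lemma psi_eq: "psi R sm z p = (+>) (Ann R sm z) ` colon_e R sm p"
  unfolding psi_def by simp

lemma psi_primeideal: "p \<in> Spec_M R madd sm \<Longrightarrow> primeideal (psi R sm z p) (R Quot Ann R sm z)"
  unfolding psi_eq
  by (rule quot_primeideal[OF Ann_ideal primeideal_colon_e Ann_subset_colon_e[OF Spec_M_submodule_elem]])

lemma psi_subset_iff:
  "p \<in> Spec_M R madd sm \<Longrightarrow> q \<in> Spec_M R madd sm \<Longrightarrow>
    psi R sm z p \<subseteq> psi R sm z q \<longleftrightarrow> colon_e R sm p \<subseteq> colon_e R sm q"
  unfolding psi_eq
  by (rule quot_ideal_subset_iff[OF Ann_ideal
        ideal_colon_e[OF Spec_M_submodule_elem] Ann_subset_colon_e[OF Spec_M_submodule_elem]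
        ideal_colon_e[OF Spec_M_submodule_elem] Ann_subset_colon_e[OF Spec_M_submodule_elem]])

lemma psi_eq_iff:
  "p \<in> Spec_M R madd sm \<Longrightarrow> q \<in> Spec_M R madd sm \<Longrightarrow>
    psi R sm z p = psi R sm z q \<longleftrightarrow> colon_e R sm p = colon_e R sm q"
  using psi_subset_iff[of p q] psi_subset_iff[of q p] by auto

end

locale le_module_psi_surj = le_module_over +
  assumes psi_surj: "{P. primeideal P (R Quot Ann R sm z)} \<subseteq> psi R sm z ` Spec_M R madd sm"
begin

lemma colon_e_surj:
  assumes P: "primeideal P R" and "Ann R sm z \<subseteq> P"
  obtains p where "p \<in> Spec_M R madd sm" "colon_e R sm p = P"
proof -
  have "primeideal ((+>) (Ann R sm z) ` P) (R Quot Ann R sm z)"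
    by (rule quot_primeideal[OF Ann_ideal assms])
  then obtain p where p: "p \<in> Spec_M R madd sm" "(+>) (Ann R sm z) ` P = psi R sm z p"
    using psi_surj by blast
  have "colon_e R sm p = P"
    using Union_rcosets_ideal[OF Ann_ideal primeideal.axioms(1)[OF P] assms(2)]
      Union_rcosets_ideal[OF Ann_ideal ideal_colon_e Ann_subset_colon_e]
      Spec_M_submodule_elem[OF p(1)] p(2) unfolding psi_eq by metis
  then show ?thesis using that p(1) by blast
qed

lemma irreducible_subset_Vstar:
  assumes Y: "zariski_irreducible R madd sm Y"
  obtains p where "p \<in> Spec_M R madd sm" "Y \<subseteq> Vstar R madd sm p"
    "colon_e R sm p = (\<Inter>q\<in>Y. colon_e R sm q)"
proof -
  have YS: "Y \<subseteq> Spec_M R madd sm" using Y unfolding zariski_irreducible_def by auto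
  have "Ann R sm z \<subseteq> (\<Inter>q\<in>Y. colon_e R sm q)"
    using Ann_subset_colon_e Spec_M_submodule_elem YS by blast
  with primeideal_Inter_colon_e[OF Y] obtain p
    where "p \<in> Spec_M R madd sm" "colon_e R sm p = (\<Inter>q\<in>Y. colon_e R sm q)"
    by (rule colon_e_surj)
  moreover have "Y \<subseteq> Vstar R madd sm p" using calculation YS unfolding Vstar_def by auto
  ultimately show ?thesis using that by blast
qed

lemma closed_irreducible_iff_Vstar:
  "Y \<in> zariski_closed R madd sm \<and> zariski_irreducible R madd sm Y \<longleftrightarrow>
    (\<exists>p\<in>Spec_M R madd sm. Y = Vstar R madd sm p)"
proof
  assume "Y \<in> zariski_closed R madd sm \<and> zariski_irreducible R madd sm Y"
  then obtain n p where n: "Y = Vstar R madd sm n" and p: "p \<in> Spec_M R madd sm"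
    "Y \<subseteq> Vstar R madd sm p" "colon_e R sm p = (\<Inter>q\<in>Y. colon_e R sm q)"
    unfolding zariski_closed_def by (auto elim: irreducible_subset_Vstar)
  then have "colon_e R sm n \<subseteq> colon_e R sm p" unfolding Vstar_def by auto
  then have "Vstar R madd sm p \<subseteq> Y" using n unfolding Vstar_def by auto
  then show "\<exists>p\<in>Spec_M R madd sm. Y = Vstar R madd sm p" using p by blast
next
  assume "\<exists>p\<in>Spec_M R madd sm. Y = Vstar R madd sm p"
  then show "Y \<in> zariski_closed R madd sm \<and> zariski_irreducible R madd sm Y"
    using Vstar_closed irreducible_Vstar by blast
qed

lemma irreducible_component_Vstar:
  assumes "Y \<in> irreducible_components R madd sm"
  obtains p where "p \<in> Spec_M R madd sm" "Y = Vstar R madd sm p"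
proof -
  have Y: "zariski_irreducible R madd sm Y"
    and maximal: "\<And>Z. zariski_irreducible R madd sm Z \<Longrightarrow> Y \<subseteq> Z \<Longrightarrow> Z = Y"
    using assms unfolding irreducible_components_def by auto
  obtain p where p: "p \<in> Spec_M R madd sm" "Y \<subseteq> Vstar R madd sm p"
    by (rule irreducible_subset_Vstar[OF Y])
  have "Vstar R madd sm p = Y" by (rule maximal[OF irreducible_Vstar[OF p(1)] p(2)])
  with p(1) show ?thesis by (rule that[OF _ sym])
qed

lemma Vstar_irreducible_component_iff:
  assumes p: "p \<in> Spec_M R madd sm"
  shows "Vstar R madd sm p \<in> irreducible_components R madd sm \<longleftrightarrow>
         minimal_primeideal (psi R sm z p) (R Quot Ann R sm z)"
proof
  assume "Vstar R madd sm p \<in> irreducible_components R madd sm"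
  then have maximal: "\<And>Z. zariski_irreducible R madd sm Z \<Longrightarrow> Vstar R madd sm p \<subseteq> Z \<Longrightarrow>
      Z = Vstar R madd sm p"
    unfolding irreducible_components_def by auto
  show "minimal_primeideal (psi R sm z p) (R Quot Ann R sm z)"
    unfolding minimal_primeideal_def
  proof (intro conjI allI impI psi_primeideal[OF p])
    fix Q assume Q: "primeideal Q (R Quot Ann R sm z) \<and> Q \<subseteq> psi R sm z p"
    then obtain q where q: "q \<in> Spec_M R madd sm" "Q = psi R sm z q" using psi_surj by blast
    then have "colon_e R sm q \<subseteq> colon_e R sm p" using Q psi_subset_iff[OF q(1) p] by simp
    then have "Vstar R madd sm p \<subseteq> Vstar R madd sm q" using Vstar_subset_iff[OF p] by simp
    then have "Vstar R madd sm q = Vstar R madd sm p" by (rule maximal[OF irreducible_Vstar[OF q(1)]])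
    then show "Q = psi R sm z p" using q Vstar_eq_iff[OF q(1) p] psi_eq_iff[OF q(1) p] by simp
  qed
next
  assume minimal: "minimal_primeideal (psi R sm z p) (R Quot Ann R sm z)"
  show "Vstar R madd sm p \<in> irreducible_components R madd sm"
    unfolding irreducible_components_def
  proof (intro CollectI conjI allI impI irreducible_Vstar[OF p])
    fix Z assume Z: "zariski_irreducible R madd sm Z \<and> Vstar R madd sm p \<subseteq> Z"
    obtain q where q: "q \<in> Spec_M R madd sm" "Z \<subseteq> Vstar R madd sm q"
      "colon_e R sm q = (\<Inter>s\<in>Z. colon_e R sm s)"
      using irreducible_subset_Vstar Z by blast
    have "p \<in> Z" using Z Vstar_self[OF p] by blast
    then have "colon_e R sm q \<subseteq> colon_e R sm p" using q(3) by blast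
    then have "psi R sm z q \<subseteq> psi R sm z p" using psi_subset_iff[OF q(1) p] by simp
    then have "psi R sm z q = psi R sm z p"
      using minimal psi_primeideal[OF q(1)] unfolding minimal_primeideal_def by blast
    then have "Vstar R madd sm q = Vstar R madd sm p"
      using psi_eq_iff[OF q(1) p] Vstar_eq_iff[OF q(1) p] by simp
    then show "Z = Vstar R madd sm p" using Z q(2) by blast
  qed
qed

lemma psi_SOME_Vstar:
  assumes p: "p \<in> Spec_M R madd sm" and Y: "Y = Vstar R madd sm p"
  shows "psi R sm z (SOME q. q \<in> Spec_M R madd sm \<and> Y = Vstar R madd sm q) = psi R sm z p"
proof -
  let ?q = "SOME q. q \<in> Spec_M R madd sm \<and> Y = Vstar R madd sm q"
  have q: "?q \<in> Spec_M R madd sm" "Vstar R madd sm p = Vstar R madd sm ?q"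
    using someI[of "\<lambda>q. q \<in> Spec_M R madd sm \<and> Y = Vstar R madd sm q" p] p Y
    by auto
  then have "colon_e R sm p = colon_e R sm ?q" using Vstar_eq_iff[OF p q(1)] by simp
  then show ?thesis using psi_eq_iff[OF q(1) p] by simp
qed

lemma bij_betw_irreducible_components_minimal_primeideals:
  "bij_betw (\<lambda>Y. psi R sm z (SOME p. p \<in> Spec_M R madd sm \<and> Y = Vstar R madd sm p))
     (irreducible_components R madd sm) {P. minimal_primeideal P (R Quot Ann R sm z)}"
    (is "bij_betw ?f ?C ?P")
proof (unfold bij_betw_def, intro conjI)
  show "inj_on ?f ?C"
  proof (rule inj_onI)
    fix Y1 Y2 assume Y1: "Y1 \<in> ?C" and Y2: "Y2 \<in> ?C" and f_eq: "?f Y1 = ?f Y2"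
    obtain p1 where p1: "p1 \<in> Spec_M R madd sm" "Y1 = Vstar R madd sm p1"
      by (rule irreducible_component_Vstar[OF Y1])
    obtain p2 where p2: "p2 \<in> Spec_M R madd sm" "Y2 = Vstar R madd sm p2"
      by (rule irreducible_component_Vstar[OF Y2])
    have "psi R sm z p1 = ?f Y1" by (rule psi_SOME_Vstar[OF p1, symmetric])
    also have "\<dots> = ?f Y2" by (rule f_eq)
    also have "\<dots> = psi R sm z p2" by (rule psi_SOME_Vstar[OF p2])
    finally have "psi R sm z p1 = psi R sm z p2" .
    then have "Vstar R madd sm p1 = Vstar R madd sm p2"
      using psi_eq_iff[OF p1(1) p2(1)] Vstar_eq_iff[OF p1(1) p2(1)] by simp
    then show "Y1 = Y2" using p1(2) p2(2) by simp
  qed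
  show "?f ` ?C = ?P"
  proof (intro equalityI subsetI)
    fix P assume "P \<in> ?f ` ?C"
    then obtain Y where Y: "Y \<in> ?C" "P = ?f Y" by blast
    obtain p where p: "p \<in> Spec_M R madd sm" "Y = Vstar R madd sm p"
      by (rule irreducible_component_Vstar[OF Y(1)])
    have "P = psi R sm z p" using Y(2) psi_SOME_Vstar[OF p] by simp
    then show "P \<in> ?P" using Vstar_irreducible_component_iff[OF p(1)] Y(1) p(2) by simp
  next
    fix P assume "P \<in> ?P"
    then have "primeideal P (R Quot Ann R sm z)" unfolding minimal_primeideal_def by simp
    then obtain p where p: "p \<in> Spec_M R madd sm" "P = psi R sm z p" using psi_surj by blast
    then have "Vstar R madd sm p \<in> ?C"
      using Vstar_irreducible_component_iff[OF p(1)] \<open>P \<in> ?P\<close> by simp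
    moreover have "P = ?f (Vstar R madd sm p)" using psi_SOME_Vstar[OF p(1) refl] p(2) by simp
    ultimately show "P \<in> ?f ` ?C" by (rule rev_image_eqI)
  qed
qed

end

theorem theorem6p6:
  fixes R :: "('r, 'x) ring_scheme"
    and madd :: "'m::complete_lattice \<Rightarrow> 'm \<Rightarrow> 'm"
    and z :: 'm
    and sm :: "'r \<Rightarrow> 'm \<Rightarrow> 'm"
  assumes "cring R"
    and "le_module R madd z sm"
    and "{P. primeideal P (R Quot Ann R sm z)} \<subseteq> psi R sm z ` Spec_M R madd sm"
  shows "(\<forall>Y. (Y \<in> zariski_closed R madd sm \<and> zariski_irreducible R madd sm Y) \<longleftrightarrow>
              (\<exists>p\<in>Spec_M R madd sm. Y = Vstar R madd sm p))
     \<and> (\<forall>Y. Y \<in> zariski_closed R madd sm \<and> zariski_irreducible R madd sm Y \<longrightarrow>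
              (\<exists>y. generic_point R madd sm Y y))
     \<and> (Vstar R madd sm ` Spec_M R madd sm =
          {Y \<in> zariski_closed R madd sm. zariski_irreducible R madd sm Y})
     \<and> (\<forall>Y\<in>irreducible_components R madd sm. \<exists>p\<in>Spec_M R madd sm. Y = Vstar R madd sm p)
     \<and> (\<forall>p\<in>Spec_M R madd sm. \<forall>q\<in>Spec_M R madd sm.
           Vstar R madd sm p = Vstar R madd sm q \<longrightarrow> psi R sm z p = psi R sm z q)
     \<and> bij_betw
         (\<lambda>Y. psi R sm z (SOME p. p \<in> Spec_M R madd sm \<and> Y = Vstar R madd sm p))
         (irreducible_components R madd sm)
         {P. minimal_primeideal P (R Quot Ann R sm z)}"
proof -
  interpret le_module_psi_surj R madd z sm
    by (intro le_module_psi_surj.intro le_module_over.intro le_module_over_axioms.intro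
        le_module_psi_surj_axioms.intro assms)
  show ?thesis
  proof (intro conjI allI ballI impI)
    fix Y assume "Y \<in> zariski_closed R madd sm \<and> zariski_irreducible R madd sm Y"
    then obtain p where "p \<in> Spec_M R madd sm" "Y = Vstar R madd sm p"
      using closed_irreducible_iff_Vstar by blast
    then show "\<exists>y. generic_point R madd sm Y y" using generic_point_Vstar by blast
  next
    fix p q assume "p \<in> Spec_M R madd sm" "q \<in> Spec_M R madd sm"
      and "Vstar R madd sm p = Vstar R madd sm q"
    then show "psi R sm z p = psi R sm z q" using Vstar_eq_iff psi_eq_iff by simp
  next
    fix Y assume "Y \<in> irreducible_components R madd sm"
    then show "\<exists>p\<in>Spec_M R madd sm. Y = Vstar R madd sm p"
      by (blast elim: irreducible_component_Vstar)
  qed (use closed_irreducible_iff_Vstar bij_betw_irreducible_components_minimal_primeideals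
      in blast)+
qed

end
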